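(* Let $\lambda, \mu, \nu$ be real numbers with $\mu > -1$ and let $$\mathcal{H}_{\lambda,\mu,\nu}(a)(n) = \sum_{m=1}^{\infty} \frac{m^{\mu} n^{\nu}}{(m+n)^{\lambda}} a_m, \quad n \in \mathbb{N}.$$ Then $\mathcal{H}_{\lambda,\mu,\nu}$ is bounded from $l^\infty$ to $l^\infty$ if and only if $$\lambda \geq \mu + \nu + 1 \quad\text{and}\quad \lambda > \mu + 1.$$
   Context: $l^\infty$ is the space of real sequences $a=\{a_m\}_{m\ge1}$ with $\|a\|_\infty = \sup_{m\in\mathbb{N}} |a_m| < \infty$. Bounded means: for every $a \in l^\infty$ the defining series converge, the image lies in $l^\infty$, and $\|\mathcal{H}_{\lambda,\mu,\nu} a\|_\infty \le C\|a\|_\infty$ for a constant $C$ independent of $a$. *)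

theory Defs
  imports "HOL-Analysis.Analysis"
begin

text \<open>Sequences are indexed by the positive integers: a real sequence is a function
  nat \<Rightarrow> real of which only the values at m \<ge> 1 matter.\<close>

definition linf :: "(nat \<Rightarrow> real) set" where
  "linf = {a. bdd_above ((\<lambda>m. \<bar>a m\<bar>) ` {1..})}"

definition linf_norm :: "(nat \<Rightarrow> real) \<Rightarrow> real" where
  "linf_norm a = (SUP m\<in>{1..}. \<bar>a m\<bar>)"

definition hilbert_term :: "real \<Rightarrow> real \<Rightarrow> real \<Rightarrow> (nat \<Rightarrow> real) \<Rightarrow> nat \<Rightarrow> nat \<Rightarrow> real" where
  "hilbert_term lam mu nu a n m =
     real m powr mu * real n powr nu / real (m + n) powr lam * a m"

definition hilbert_op :: "real \<Rightarrow> real \<Rightarrow> real \<Rightarrow> (nat \<Rightarrow> real) \<Rightarrow> nat \<Rightarrow> real" where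
  "hilbert_op lam mu nu a n = (\<Sum>k. hilbert_term lam mu nu a n (Suc k))"

definition bounded_linf_op :: "real \<Rightarrow> real \<Rightarrow> real \<Rightarrow> bool" where
  "bounded_linf_op lam mu nu \<longleftrightarrow>
     (\<exists>C. \<forall>a\<in>linf.
        (\<forall>n\<ge>1. summable (\<lambda>k. hilbert_term lam mu nu a n (Suc k)))
        \<and> hilbert_op lam mu nu a \<in> linf
        \<and> linf_norm (hilbert_op lam mu nu a) \<le> C * linf_norm a)"

end

(*
  For an operator with nonnegative kernel k n m, boundedness on l^\<infinity> is equivalent to
  uniformly bounded row sums \<Sum>m. k n m: sufficiency is the trivial estimate of a series
  by its majorant, necessity follows by testing with the constant sequence 1.

  For k n m = m^mu n^nu / (m+n)^lam the row sum splits at m = n. Comparing sums of powers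
  with integrals (mean value theorem), the part m \<le> n is at most a constant times
  n^(mu+nu+1-lam) as soon as mu > -1, and the part m > n is at most
  n^(mu+nu+1-lam) / (lam-mu-1) when lam > mu+1; so both conditions suffice.
  Conversely, the first row is summable only if lam > mu+1, and the block n < m \<le> 2n
  alone contributes a constant times n^(mu+nu+1-lam), which stays bounded in n only if
  lam \<ge> mu+nu+1.
*)

theory Submission
  imports Defs "HOL-Real_Asymp.Multiseries_Expansion"
begin

lemma powr_le_diff_powr:
  fixes p x :: real
  assumes "p \<le> 0" "p \<noteq> -1" "x > 0"
  shows "(x + 1) powr p \<le> ((x + 1) powr (p + 1) - x powr (p + 1)) / (p + 1)"
proof -
  have "\<exists>z. x < z \<and> z < x + 1 \<and>
      (x + 1) powr (p + 1) - x powr (p + 1) = ((x + 1) - x) * ((p + 1) * z powr (p + 1 - 1))"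
    using assms(3) by (intro MVT2 has_real_derivative_powr) auto
  then obtain z where z: "x < z" "z < x + 1"
    and mvt: "(x + 1) powr (p + 1) - x powr (p + 1) = (p + 1) * z powr p"
    by auto
  have "(x + 1) powr p \<le> z powr p"
    using assms z by (intro powr_mono2') auto
  also have "\<dots> = ((x + 1) powr (p + 1) - x powr (p + 1)) / (p + 1)"
    using mvt assms(2) by simp
  finally show ?thesis .
qed

lemma sum_powr_telescope_le:
  fixes p :: real
  assumes "p \<le> 0" "p \<noteq> -1" "n \<ge> 1"
  shows "(\<Sum>m\<in>{n<..n+N}. real m powr p) \<le> (real (n+N) powr (p+1) - real n powr (p+1)) / (p+1)"
proof (induction N)
  case 0
  then show ?case by simp
next
  case (Suc N)
  have "{n<..n + Suc N} = insert (Suc (n + N)) {n<..n + N}" by auto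
  then have "(\<Sum>m\<in>{n<..n + Suc N}. real m powr p) = (\<Sum>m\<in>{n<..n + N}. real m powr p) + (real (n + N) + 1) powr p"
    by (simp add: add_ac)
  also have "\<dots> \<le> (real (n+N) powr (p+1) - real n powr (p+1)) / (p+1)
      + ((real (n+N) + 1) powr (p+1) - real (n+N) powr (p+1)) / (p+1)"
    using Suc powr_le_diff_powr[OF assms(1,2), of "real (n+N)"] assms(3) by simp
  also have "\<dots> = (real (n + Suc N) powr (p+1) - real n powr (p+1)) / (p+1)"
    by (simp add: diff_divide_distrib add_ac)
  finally show ?case .
qed

lemma sum_powr_le:
  fixes mu :: real
  assumes "mu > -1"
  shows "(\<Sum>m=1..n. real m powr mu) \<le> max 1 (1 / (mu + 1)) * real n powr (mu + 1)"
proof (cases "n = 0")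
  case False
  show ?thesis
  proof (cases "mu < 0")
    case True
    have "{1..n} = insert 1 {1<..1 + (n - 1)}"
      using False by auto
    then have "(\<Sum>m=1..n. real m powr mu) = 1 + (\<Sum>m\<in>{1<..1 + (n - 1)}. real m powr mu)"
      by simp
    also have "\<dots> \<le> 1 + (real n powr (mu + 1) - 1) / (mu + 1)"
      using sum_powr_telescope_le[of mu 1 "n - 1"] False True assms by simp
    also have "\<dots> \<le> real n powr (mu + 1) / (mu + 1)"
      using True assms mult_nonpos_nonneg[of mu "mu + 1"] by (simp add: field_simps)
    also have "\<dots> \<le> max 1 (1 / (mu + 1)) * real n powr (mu + 1)"
      by (simp add: divide_inverse mult.commute mult_right_mono)
    finally show ?thesis .
  next
    case False
    have "(\<Sum>m=1..n. real m powr mu) \<le> (\<Sum>m=1..n. real n powr mu)"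
      using False by (intro sum_mono powr_mono2) auto
    also have "\<dots> = real n powr (mu + 1)"
      by (simp add: powr_mult_base add.commute)
    also have "\<dots> \<le> max 1 (1 / (mu + 1)) * real n powr (mu + 1)"
      by (intro mult_le_cancel_right1[THEN iffD2, rule_format]) auto
    finally show ?thesis .
  qed
qed simp

lemma sum_powr_tail_le:
  fixes p :: real
  assumes "p < -1" "n \<ge> 1"
  shows "(\<Sum>m\<in>{n<..n+N}. real m powr p) \<le> real n powr (p + 1) / - (p + 1)"
proof -
  have "(\<Sum>m\<in>{n<..n+N}. real m powr p) \<le> (real (n+N) powr (p+1) - real n powr (p+1)) / (p+1)"
    using sum_powr_telescope_le[of p n N] assms by simp
  also have "\<dots> = (real n powr (p+1) - real (n+N) powr (p+1)) / - (p+1)"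
    using assms(1) by (simp add: field_simps)
  also have "\<dots> \<le> real n powr (p + 1) / - (p + 1)"
    using assms(1) by (intro divide_right_mono) auto
  finally show ?thesis .
qed

definition hilbert_kernel :: "real \<Rightarrow> real \<Rightarrow> real \<Rightarrow> nat \<Rightarrow> nat \<Rightarrow> real" where
  "hilbert_kernel lam mu nu n m = real m powr mu * real n powr nu / real (m + n) powr lam"

lemma hilbert_kernel_nonneg: "0 \<le> hilbert_kernel lam mu nu n m"
  by (simp add: hilbert_kernel_def)

lemma hilbert_term_eq: "hilbert_term lam mu nu a n m = hilbert_kernel lam mu nu n m * a m"
  by (simp add: hilbert_term_def hilbert_kernel_def)

lemma linf_norm_ge:
  assumes "a \<in> linf" "m \<ge> 1"
  shows "\<bar>a m\<bar> \<le> linf_norm a"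
  unfolding linf_norm_def using assms by (intro cSUP_upper) (auto simp: linf_def)

lemma linf_norm_nonneg: "a \<in> linf \<Longrightarrow> 0 \<le> linf_norm a"
  using linf_norm_ge[of a 1] by simp

lemma linfI: "(\<And>m. m \<ge> 1 \<Longrightarrow> \<bar>a m\<bar> \<le> B) \<Longrightarrow> a \<in> linf"
  unfolding linf_def by (auto intro!: bdd_aboveI2[where M = B])

lemma linf_norm_le: "(\<And>m. m \<ge> 1 \<Longrightarrow> \<bar>a m\<bar> \<le> B) \<Longrightarrow> linf_norm a \<le> B"
  unfolding linf_norm_def by (rule cSUP_least) auto

lemma kernel_series_bound:
  fixes k a :: "nat \<Rightarrow> real"
  assumes k_nonneg: "\<And>m. 0 \<le> k m" and partial_sums: "\<And>N. (\<Sum>j<N. k (Suc j)) \<le> K"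
    and a: "a \<in> linf"
  shows "summable (\<lambda>j. k (Suc j) * a (Suc j))"
    and "\<bar>\<Sum>j. k (Suc j) * a (Suc j)\<bar> \<le> K * linf_norm a"
proof -
  have k_summable: "summable (\<lambda>j. k (Suc j))"
    by (intro bounded_imp_summable[where B = K] k_nonneg) (metis lessThan_Suc_atMost partial_sums)
  have k_suminf: "(\<Sum>j. k (Suc j)) \<le> K"
    using k_summable partial_sums by (rule suminf_le_const)
  have majorant: "norm (k (Suc j) * a (Suc j)) \<le> linf_norm a * k (Suc j)" for j
    using linf_norm_ge[OF a, of "Suc j"] k_nonneg[of "Suc j"]
    by (simp add: abs_mult mult.commute[of "linf_norm a"] mult_left_mono)
  have majorant_summable: "summable (\<lambda>j. linf_norm a * k (Suc j))"
    using k_summable by (rule summable_mult)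
  show "summable (\<lambda>j. k (Suc j) * a (Suc j))"
    using majorant_summable majorant by (rule summable_comparison_test')
  have "\<bar>\<Sum>j. k (Suc j) * a (Suc j)\<bar> \<le> (\<Sum>j. linf_norm a * k (Suc j))"
    using norm_suminf_le[OF majorant majorant_summable] by simp
  also have "\<dots> = linf_norm a * (\<Sum>j. k (Suc j))"
    using k_summable by (rule suminf_mult)
  also have "\<dots> \<le> K * linf_norm a"
    using mult_left_mono[OF k_suminf linf_norm_nonneg[OF a]] by (simp add: mult.commute)
  finally show "\<bar>\<Sum>j. k (Suc j) * a (Suc j)\<bar> \<le> K * linf_norm a" .
qed

lemma bounded_linf_opI:
  assumes "\<And>n N. n \<ge> 1 \<Longrightarrow> (\<Sum>j<N. hilbert_kernel lam mu nu n (Suc j)) \<le> K"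
  shows "bounded_linf_op lam mu nu"
  unfolding bounded_linf_op_def
proof (intro exI ballI conjI allI impI)
  fix a assume a: "a \<in> linf"
  have summable: "summable (\<lambda>j. hilbert_term lam mu nu a n (Suc j))"
    and bound: "\<bar>hilbert_op lam mu nu a n\<bar> \<le> K * linf_norm a" if "n \<ge> 1" for n
    using kernel_series_bound[OF hilbert_kernel_nonneg assms[OF that] a]
    by (simp_all add: hilbert_op_def hilbert_term_eq)
  show "summable (\<lambda>j. hilbert_term lam mu nu a n (Suc j))" if "n \<ge> 1" for n
    using summable that .
  show "hilbert_op lam mu nu a \<in> linf"
    using bound by (rule linfI)
  show "linf_norm (hilbert_op lam mu nu a) \<le> K * linf_norm a"
    using bound by (rule linf_norm_le)
qed

lemma bounded_linf_opD:
  assumes "bounded_linf_op lam mu nu"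
  obtains C where "\<And>n. n \<ge> 1 \<Longrightarrow> summable (\<lambda>j. hilbert_kernel lam mu nu n (Suc j))"
    and "\<And>n. n \<ge> 1 \<Longrightarrow> (\<Sum>j. hilbert_kernel lam mu nu n (Suc j)) \<le> C"
proof -
  define one :: "nat \<Rightarrow> real" where "one = (\<lambda>_. 1)"
  have one: "one \<in> linf" "linf_norm one = 1"
    by (auto simp: one_def linf_norm_def intro: linfI)
  obtain C where summable: "\<forall>n\<ge>1. summable (\<lambda>j. hilbert_term lam mu nu one n (Suc j))"
    and image: "hilbert_op lam mu nu one \<in> linf" and norm: "linf_norm (hilbert_op lam mu nu one) \<le> C"
    using assms one unfolding bounded_linf_op_def by fastforce
  have "hilbert_op lam mu nu one n \<le> C" if "n \<ge> 1" for n
    using linf_norm_ge[OF image that] norm by linarith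
  with summable show thesis
    by (intro that[of C]) (simp_all add: hilbert_op_def hilbert_term_eq one_def)
qed

lemma hilbert_kernel_head_sum_le:
  fixes lam mu nu :: real
  assumes "mu > -1" "lam \<ge> 0" "n \<ge> 1"
  shows "(\<Sum>m=1..n. hilbert_kernel lam mu nu n m)
    \<le> max 1 (1 / (mu + 1)) * real n powr (mu + nu + 1 - lam)"
proof -
  have "(\<Sum>m=1..n. hilbert_kernel lam mu nu n m) \<le> (\<Sum>m=1..n. real m powr mu * real n powr (nu - lam))"
  proof (rule sum_mono)
    fix m assume "m \<in> {1..n}"
    have "real n powr lam \<le> real (m + n) powr lam"
      using assms by (intro powr_mono2) auto
    then have "hilbert_kernel lam mu nu n m \<le> real m powr mu * real n powr nu / real n powr lam"
      unfolding hilbert_kernel_def using assms(3) by (intro divide_left_mono) auto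
    then show "hilbert_kernel lam mu nu n m \<le> real m powr mu * real n powr (nu - lam)"
      by (simp add: powr_diff)
  qed
  also have "\<dots> = (\<Sum>m=1..n. real m powr mu) * real n powr (nu - lam)"
    by (simp add: sum_distrib_right)
  also have "\<dots> \<le> max 1 (1 / (mu + 1)) * real n powr (mu + 1) * real n powr (nu - lam)"
    using sum_powr_le[OF assms(1)] by (intro mult_right_mono) auto
  also have "\<dots> = max 1 (1 / (mu + 1)) * real n powr (mu + nu + 1 - lam)"
    by (simp add: mult.assoc powr_add[symmetric] algebra_simps)
  finally show ?thesis .
qed

lemma hilbert_kernel_tail_sum_le:
  fixes lam mu nu :: real
  assumes "lam > mu + 1" "lam \<ge> 0" "n \<ge> 1"
  shows "(\<Sum>m\<in>{n<..n+N}. hilbert_kernel lam mu nu n m) \<le> real n powr (mu + nu + 1 - lam) / (lam - mu - 1)"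
proof -
  have "(\<Sum>m\<in>{n<..n+N}. hilbert_kernel lam mu nu n m) \<le> (\<Sum>m\<in>{n<..n+N}. real n powr nu * real m powr (mu - lam))"
  proof (rule sum_mono)
    fix m assume m: "m \<in> {n<..n+N}"
    have "real m powr lam \<le> real (m + n) powr lam"
      using assms by (intro powr_mono2) auto
    then have "hilbert_kernel lam mu nu n m \<le> real m powr mu * real n powr nu / real m powr lam"
      unfolding hilbert_kernel_def using m by (intro divide_left_mono) auto
    then show "hilbert_kernel lam mu nu n m \<le> real n powr nu * real m powr (mu - lam)"
      by (simp add: powr_diff mult.commute)
  qed
  also have "\<dots> = real n powr nu * (\<Sum>m\<in>{n<..n+N}. real m powr (mu - lam))"
    by (simp add: sum_distrib_left)
  also have "\<dots> \<le> real n powr nu * (real n powr (mu - lam + 1) / - (mu - lam + 1))"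
    using sum_powr_tail_le[of "mu - lam" n N] assms by (intro mult_left_mono) auto
  also have "\<dots> = real n powr (mu + nu + 1 - lam) / (lam - mu - 1)"
    by (simp add: powr_add[symmetric] algebra_simps)
  finally show ?thesis .
qed

lemma hilbert_kernel_partial_sum_le:
  fixes lam mu nu :: real
  assumes "mu > -1" "lam > mu + 1" "lam \<ge> mu + nu + 1" "n \<ge> 1"
  shows "(\<Sum>m=1..N. hilbert_kernel lam mu nu n m) \<le> max 1 (1 / (mu + 1)) + 1 / (lam - mu - 1)"
proof -
  have lam: "lam \<ge> 0"
    using assms(1,2) by simp
  have scale: "real n powr (mu + nu + 1 - lam) \<le> 1"
    using powr_mono[of "mu + nu + 1 - lam" 0 "real n"] assms(3,4) by simp
  have "(\<Sum>m=1..N. hilbert_kernel lam mu nu n m) \<le> (\<Sum>m=1..n+N. hilbert_kernel lam mu nu n m)"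
    by (intro sum_mono2 hilbert_kernel_nonneg) auto
  also have "\<dots> = (\<Sum>m=1..n. hilbert_kernel lam mu nu n m) + (\<Sum>m\<in>{n<..n+N}. hilbert_kernel lam mu nu n m)"
    by (subst sum.union_disjoint[symmetric]) (auto intro: sum.cong)
  also have "\<dots> \<le> max 1 (1 / (mu + 1)) * real n powr (mu + nu + 1 - lam)
      + real n powr (mu + nu + 1 - lam) / (lam - mu - 1)"
    using hilbert_kernel_head_sum_le[OF assms(1) lam assms(4)] hilbert_kernel_tail_sum_le[OF assms(2) lam assms(4)]
    by (rule add_mono)
  also have "\<dots> \<le> max 1 (1 / (mu + 1)) + 1 / (lam - mu - 1)"
    using scale assms(2) by (intro add_mono mult_left_le divide_right_mono) auto
  finally show ?thesis .
qed

lemma hilbert_kernel_row_summable_imp: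
  fixes lam mu nu :: real
  assumes summable: "summable (\<lambda>j. hilbert_kernel lam mu nu n (Suc j))" and "n \<ge> 1"
  shows "lam > mu + 1"
proof -
  define D where "D = max 1 (real (n + 1) powr lam)"
  have denom: "real (m + n) powr lam \<le> D * real m powr lam" if "m \<ge> 1" for m
  proof (cases "lam \<ge> 0")
    case True
    have "real (m + n) powr lam \<le> (real (n + 1) * real m) powr lam"
      using True that by (intro powr_mono2) (auto simp: algebra_simps mult_le_cancel_right1)
    also have "\<dots> \<le> D * real m powr lam"
      unfolding powr_mult D_def by (intro mult_right_mono) auto
    finally show ?thesis .
  next
    case False
    have "real (m + n) powr lam \<le> real m powr lam"
      using False that by (intro powr_mono2') auto
    also have "\<dots> \<le> D * real m powr lam"
      by (intro mult_le_cancel_right1[THEN iffD2, rule_format]) (auto simp: D_def)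
    finally show ?thesis .
  qed
  have "summable (\<lambda>j. D / real n powr nu * hilbert_kernel lam mu nu n (Suc j))"
    using summable by (rule summable_mult)
  then have "summable (\<lambda>j. real (Suc j) powr (mu - lam))"
  proof (rule summable_comparison_test')
    fix j :: nat
    have "real (Suc j) powr (mu - lam) = D * real (Suc j) powr mu / (D * real (Suc j) powr lam)"
      by (simp add: powr_diff D_def)
    also have "\<dots> \<le> D * real (Suc j) powr mu / real (Suc j + n) powr lam"
      using denom[of "Suc j"] by (intro divide_left_mono) (auto simp: D_def)
    also have "\<dots> = D / real n powr nu * hilbert_kernel lam mu nu n (Suc j)"
      using assms(2) by (simp add: hilbert_kernel_def)
    finally show "norm (real (Suc j) powr (mu - lam)) \<le> D / real n powr nu * hilbert_kernel lam mu nu n (Suc j)"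
      by simp
  qed
  then have "summable (\<lambda>j. real j powr (mu - lam))"
    by (rule summable_Suc_iff[THEN iffD1])
  then have "mu - lam < -1"
    by (simp add: summable_real_powr_iff)
  then show ?thesis by simp
qed

lemma hilbert_kernel_block_ge:
  fixes lam mu nu :: real
  assumes "lam \<ge> 0" "n < m" "m \<le> 2 * n"
  shows "min 1 (2 powr mu) / 3 powr lam * real n powr (mu + nu - lam) \<le> hilbert_kernel lam mu nu n m"
proof -
  have n: "real n > 0" and m: "real n \<le> real m" "real m \<le> 2 * real n"
    using assms(2,3) by auto
  have numer: "min 1 (2 powr mu) * real n powr mu \<le> real m powr mu"
  proof (cases "mu \<ge> 0")
    case True
    have "min 1 (2 powr mu) * real n powr mu \<le> real n powr mu"
      by (intro mult_left_le_one_le) auto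
    also have "\<dots> \<le> real m powr mu"
      using True m by (intro powr_mono2) auto
    finally show ?thesis .
  next
    case False
    have "min 1 (2 powr mu) * real n powr mu \<le> (2 * real n) powr mu"
      unfolding powr_mult by (intro mult_right_mono) auto
    also have "\<dots> \<le> real m powr mu"
      using False m n by (intro powr_mono2') auto
    finally show ?thesis .
  qed
  have denom: "real (m + n) powr lam \<le> 3 powr lam * real n powr lam"
    unfolding powr_mult[symmetric] using assms(1) m by (intro powr_mono2) auto
  have "min 1 (2 powr mu) / 3 powr lam * real n powr (mu + nu - lam)
      = min 1 (2 powr mu) * real n powr mu * real n powr nu / (3 powr lam * real n powr lam)"
    using n by (simp add: powr_add powr_diff)
  also have "\<dots> \<le> real m powr mu * real n powr nu / (3 powr lam * real n powr lam)"
    using numer by (intro divide_right_mono mult_right_mono) auto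
  also have "\<dots> \<le> hilbert_kernel lam mu nu n m"
    unfolding hilbert_kernel_def using denom n by (intro divide_left_mono) auto
  finally show ?thesis .
qed

lemma hilbert_kernel_block_sum_ge:
  fixes lam mu nu :: real
  assumes "lam \<ge> 0"
  shows "min 1 (2 powr mu) / 3 powr lam * real n powr (mu + nu + 1 - lam)
    \<le> (\<Sum>m\<in>{n<..2*n}. hilbert_kernel lam mu nu n m)"
proof (cases "n = 0")
  case False
  have "real n * real n powr (mu + nu - lam) = real n powr (1 + (mu + nu - lam))"
    using False by (intro powr_mult_base) simp
  then have "min 1 (2 powr mu) / 3 powr lam * real n powr (mu + nu + 1 - lam)
      = real (card {n<..2*n}) * (min 1 (2 powr mu) / 3 powr lam * real n powr (mu + nu - lam))"
    by (simp add: algebra_simps)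
  also have "\<dots> \<le> (\<Sum>m\<in>{n<..2*n}. hilbert_kernel lam mu nu n m)"
    using hilbert_kernel_block_ge[OF assms] by (intro sum_bounded_below) auto
  finally show ?thesis .
qed simp

lemma hilbert_kernel_row_sums_bounded_imp:
  fixes lam mu nu :: real
  assumes "lam \<ge> 0"
    and summable: "\<And>n. n \<ge> 1 \<Longrightarrow> summable (\<lambda>j. hilbert_kernel lam mu nu n (Suc j))"
    and bounded: "\<And>n. n \<ge> 1 \<Longrightarrow> (\<Sum>j. hilbert_kernel lam mu nu n (Suc j)) \<le> C"
  shows "lam \<ge> mu + nu + 1"
proof (rule ccontr)
  assume "\<not> lam \<ge> mu + nu + 1"
  then have e: "mu + nu + 1 - lam > 0" by simp
  define c where "c = min 1 (2 powr mu) / 3 powr lam"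
  have c: "c > 0" by (simp add: c_def)
  have "c * real n powr (mu + nu + 1 - lam) \<le> C" if "n \<ge> 1" for n
  proof -
    have "c * real n powr (mu + nu + 1 - lam) \<le> (\<Sum>m\<in>{n<..2*n}. hilbert_kernel lam mu nu n m)"
      unfolding c_def by (rule hilbert_kernel_block_sum_ge[OF assms(1)])
    also have "\<dots> = (\<Sum>j\<in>{n..<2*n}. hilbert_kernel lam mu nu n (Suc j))"
      by (rule sum.reindex_bij_witness[of _ Suc "\<lambda>m. m - 1"]) auto
    also have "\<dots> \<le> (\<Sum>j. hilbert_kernel lam mu nu n (Suc j))"
      using summable[OF that] by (intro sum_le_suminf hilbert_kernel_nonneg) auto
    also have "\<dots> \<le> C"
      using bounded[OF that] .
    finally show ?thesis .
  qed
  moreover have "filterlim (\<lambda>n. c * real n powr (mu + nu + 1 - lam)) at_top sequentially"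
    by (rule filterlim_tendsto_pos_mult_at_top[OF tendsto_const c
          filterlim_compose[OF real_powr_at_top[OF e] filterlim_real_sequentially]])
  then have "\<forall>\<^sub>F n in sequentially. C < c * real n powr (mu + nu + 1 - lam) \<and> n \<ge> 1"
    by (intro eventually_conj eventually_ge_at_top) (simp add: filterlim_at_top_dense)
  then obtain n where "C < c * real n powr (mu + nu + 1 - lam)" "n \<ge> 1"
    using eventually_sequentially by auto
  ultimately show False by fastforce
qed

theorem theorem1p9:
  fixes lam mu nu :: real
  assumes "mu > -1"
  shows "bounded_linf_op lam mu nu \<longleftrightarrow> lam \<ge> mu + nu + 1 \<and> lam > mu + 1"
proof
  assume B: "bounded_linf_op lam mu nu"
  obtain C where summable: "\<And>n. n \<ge> 1 \<Longrightarrow> summable (\<lambda>j. hilbert_kernel lam mu nu n (Suc j))"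
    and bounded: "\<And>n. n \<ge> 1 \<Longrightarrow> (\<Sum>j. hilbert_kernel lam mu nu n (Suc j)) \<le> C"
    using bounded_linf_opD[OF B] by metis
  have "lam > mu + 1"
    using hilbert_kernel_row_summable_imp[OF summable[of 1]] by simp
  moreover from this have "lam \<ge> mu + nu + 1"
    using assms by (intro hilbert_kernel_row_sums_bounded_imp[OF _ summable bounded]) simp
  ultimately show "lam \<ge> mu + nu + 1 \<and> lam > mu + 1" by simp
next
  assume "lam \<ge> mu + nu + 1 \<and> lam > mu + 1"
  then have "(\<Sum>j<N. hilbert_kernel lam mu nu n (Suc j)) \<le> max 1 (1 / (mu + 1)) + 1 / (lam - mu - 1)"
    if "n \<ge> 1" for n N
    unfolding sum_bounds_lt_plus1 using hilbert_kernel_partial_sum_le[OF assms] that by blast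
  then show "bounded_linf_op lam mu nu"
    by (rule bounded_linf_opI)
qed

end
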